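(* Let $k\ge 2$ be an integer. Every graph $G$ with $\tau(G)\ge k$ that is $(P_2\cup kP_1)$-free is hamiltonian-connected.
   Context: All graphs are finite and simple. For a graph $H$, a graph $G$ is $H$-free if $G$ contains no induced subgraph isomorphic to $H$; $P_2\cup kP_1$ is the disjoint union of an edge and $k$ isolated vertices. For a graph $G$, $c(G)$ is the number of components of $G$. The toughness of $G$ is $\tau(G)=\min\{|S|/c(G-S): S\subseteq V(G),\ c(G-S)\ge 2\}$ if $G$ is not complete, and $\tau(G)=\infty$ if $G$ is complete. A graph is hamiltonian-connected if for every two distinct vertices $a,b$ there is a path from $a$ to $b$ containing all vertices of the graph. *)

theory Defs
  imports Main "HOL-Library.Extended_Real"
begin

definition graph :: "'a set \<Rightarrow> ('a \<Rightarrow> 'a \<Rightarrow> bool) \<Rightarrow> bool" where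
  "graph V E \<longleftrightarrow> finite V \<and> (\<forall>x y. E x y \<longrightarrow> x \<in> V \<and> y \<in> V)
     \<and> (\<forall>x y. E x y \<longrightarrow> E y x) \<and> (\<forall>x. \<not> E x x)"

definition complete_graph :: "'a set \<Rightarrow> ('a \<Rightarrow> 'a \<Rightarrow> bool) \<Rightarrow> bool" where
  "complete_graph V E \<longleftrightarrow> (\<forall>x\<in>V. \<forall>y\<in>V. x \<noteq> y \<longrightarrow> E x y)"

definition restr :: "('a \<Rightarrow> 'a \<Rightarrow> bool) \<Rightarrow> 'a set \<Rightarrow> 'a \<Rightarrow> 'a \<Rightarrow> bool" where
  "restr E W = (\<lambda>x y. x \<in> W \<and> y \<in> W \<and> E x y)"

definition components :: "'a set \<Rightarrow> ('a \<Rightarrow> 'a \<Rightarrow> bool) \<Rightarrow> 'a set set" where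
  "components W E = {{y \<in> W. (restr E W)\<^sup>*\<^sup>* x y} | x. x \<in> W}"

definition num_components :: "'a set \<Rightarrow> ('a \<Rightarrow> 'a \<Rightarrow> bool) \<Rightarrow> 'a set \<Rightarrow> nat" where
  "num_components V E S = card (components (V - S) E)"

definition toughness :: "'a set \<Rightarrow> ('a \<Rightarrow> 'a \<Rightarrow> bool) \<Rightarrow> ereal" where
  "toughness V E = (if complete_graph V E then \<infinity>
     else Inf {ereal (real (card S) / real (num_components V E S)) | S.
                 S \<subseteq> V \<and> num_components V E S \<ge> 2})"

definition induced_subgraph_of ::
  "'b set \<Rightarrow> ('b \<Rightarrow> 'b \<Rightarrow> bool) \<Rightarrow> 'a set \<Rightarrow> ('a \<Rightarrow> 'a \<Rightarrow> bool) \<Rightarrow> bool" where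
  "induced_subgraph_of VH EH V E \<longleftrightarrow>
     (\<exists>f. inj_on f VH \<and> f ` VH \<subseteq> V \<and> (\<forall>x\<in>VH. \<forall>y\<in>VH. EH x y \<longleftrightarrow> E (f x) (f y)))"

definition H_free ::
  "'b set \<Rightarrow> ('b \<Rightarrow> 'b \<Rightarrow> bool) \<Rightarrow> 'a set \<Rightarrow> ('a \<Rightarrow> 'a \<Rightarrow> bool) \<Rightarrow> bool" where
  "H_free VH EH V E \<longleftrightarrow> \<not> induced_subgraph_of VH EH V E"

text \<open>P_2 \<union> k P_1: vertices 0..k+1, the only edge is {0,1}.\<close>
definition P2_kP1_verts :: "nat \<Rightarrow> nat set" where
  "P2_kP1_verts k = {..<k + 2}"

definition P2_kP1_edge :: "nat \<Rightarrow> nat \<Rightarrow> bool" where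
  "P2_kP1_edge x y \<longleftrightarrow> (x = 0 \<and> y = 1) \<or> (x = 1 \<and> y = 0)"

definition ham_path :: "'a set \<Rightarrow> ('a \<Rightarrow> 'a \<Rightarrow> bool) \<Rightarrow> 'a \<Rightarrow> 'a \<Rightarrow> 'a list \<Rightarrow> bool" where
  "ham_path V E a b p \<longleftrightarrow> p \<noteq> [] \<and> distinct p \<and> set p = V \<and> hd p = a \<and> last p = b
     \<and> (\<forall>i. Suc i < length p \<longrightarrow> E (p ! i) (p ! Suc i))"

definition hamiltonian_connected :: "'a set \<Rightarrow> ('a \<Rightarrow> 'a \<Rightarrow> bool) \<Rightarrow> bool" where
  "hamiltonian_connected V E \<longleftrightarrow>
     (\<forall>a\<in>V. \<forall>b\<in>V. a \<noteq> b \<longrightarrow> (\<exists>p. ham_path V E a b p))"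

end

theory Submission
  imports Defs
begin

text \<open>Fix distinct vertices a, b and a longest a-b path P; we show that P visits every vertex.
  A path avoiding P that could be spliced into P, between consecutive vertices or across
  crossing chords, would give a longer a-b path. Hence no two vertices off P are adjacent, and
  for a vertex h off P the successors, resp. predecessors, on P of the neighbours of h form
  together with h independent sets X and Y; toughness gives h at least 2k neighbours on P, so
  both sets have at least 2k elements. By (P2 \<union> kP1)-freeness every vertex adjacent to X misses
  fewer than k vertices of X, and every edge has an end adjacent to X (likewise for Y). Counting
  these misses shows that no vertex of P is adjacent to X while its successor is adjacent to Y.
  This forces all neighbours of h on P to have the same parity of position, and makes the
  non-final vertices of the other parity pairwise non-adjacent. So the vertices off P fall into
  two parity classes, and each class together with the path vertices of the opposite parity is
  an independent set R; toughness then gives (k + 1) |R| \<le> |V|, which is incompatible with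
  |V| = |P| + (number of vertices off P).\<close>

definition walk :: "('a \<Rightarrow> 'a \<Rightarrow> bool) \<Rightarrow> 'a list \<Rightarrow> bool" where
  "walk E xs \<longleftrightarrow> (\<forall>i. Suc i < length xs \<longrightarrow> E (xs ! i) (xs ! Suc i))"

lemma walk_Nil [simp]: "walk E []" and walk_single [simp]: "walk E [x]"
  by (auto simp: walk_def)

lemma walk_Cons: "walk E (x # xs) \<longleftrightarrow> walk E xs \<and> (xs \<noteq> [] \<longrightarrow> E x (hd xs))"
  by (cases xs) (auto simp: walk_def nth_Cons split: nat.splits)

lemma walk_append:
  "walk E (xs @ ys) \<longleftrightarrow>
     walk E xs \<and> walk E ys \<and> (xs \<noteq> [] \<longrightarrow> ys \<noteq> [] \<longrightarrow> E (last xs) (hd ys))"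
  by (induction xs) (auto simp: walk_Cons)

lemma walk_rev:
  assumes "\<And>x y. E x y \<Longrightarrow> E y x" shows "walk E (rev xs) \<longleftrightarrow> walk E xs"
proof -
  have "walk E (rev xs)" if "walk E xs" for xs
    using that by (induction xs) (auto simp: walk_append walk_Cons last_rev assms)
  from this[of xs] this[of "rev xs"] show ?thesis by auto
qed

lemma walk_take: "walk E xs \<Longrightarrow> walk E (take n xs)"
  by (auto simp: walk_def)

lemma walk_map_upt:
  "(\<And>t. i \<le> t \<Longrightarrow> Suc t < j \<Longrightarrow> E (g t) (g (Suc t))) \<Longrightarrow> walk E (map g [i..<j])"
  by (auto simp: walk_def)

lemma rtranclp_restr_sym:
  assumes "\<And>x y. E x y \<Longrightarrow> E y x" "(restr E W)\<^sup>*\<^sup>* x y" shows "(restr E W)\<^sup>*\<^sup>* y x"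
  using assms(2)
proof induction
  case (step y z)
  then have "restr E W z y" using assms(1) by (auto simp: restr_def)
  then show ?case using step.IH by (meson converse_rtranclp_into_rtranclp)
qed simp

lemma rtranclp_restr_in: "(restr E W)\<^sup>*\<^sup>* x y \<Longrightarrow> x \<in> W \<Longrightarrow> y \<in> W"
  by (induction rule: rtranclp_induct) (auto simp: restr_def)

lemma rtranclp_restr_imp_path:
  assumes "(restr E W)\<^sup>*\<^sup>* u v" "u \<in> W"
  shows "\<exists>xs. xs \<noteq> [] \<and> hd xs = u \<and> last xs = v \<and> distinct xs \<and> walk E xs \<and> set xs \<subseteq> W"
  using assms(1)
proof induction
  case base then show ?case using assms(2) by (intro exI[of _ "[u]"]) auto
next
  case (step y z)
  then obtain xs where xs: "xs \<noteq> []" "hd xs = u" "last xs = y" "distinct xs" "walk E xs" "set xs \<subseteq> W"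
    by blast
  show ?case
  proof (cases "z \<in> set xs")
    case True
    then obtain i where i: "i < length xs" "xs ! i = z" by (auto simp: in_set_conv_nth)
    with xs show ?thesis
      by (intro exI[of _ "take (Suc i) xs"]) (auto simp: walk_take last_conv_nth hd_conv_nth dest: in_set_takeD)
  next
    case False
    with xs step(2) show ?thesis
      by (intro exI[of _ "xs @ [z]"]) (auto simp: restr_def walk_append)
  qed
qed

definition indep :: "('a \<Rightarrow> 'a \<Rightarrow> bool) \<Rightarrow> 'a set \<Rightarrow> bool" where
  "indep E X \<longleftrightarrow> (\<forall>x\<in>X. \<forall>y\<in>X. \<not> E x y)"

lemma indep_subset: "indep E X \<Longrightarrow> Y \<subseteq> X \<Longrightarrow> indep E Y"
  by (auto simp: indep_def)

lemma card_le_ordered_cover: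
  fixes D :: "nat set"
  assumes "finite D" "\<And>e f. e \<in> D \<Longrightarrow> f \<in> D \<Longrightarrow> e < f \<Longrightarrow> e \<in> A \<or> f \<in> B"
  shows "card D \<le> card (D \<inter> A) + card (D \<inter> B) + 1"
proof (cases "D \<subseteq> A")
  case True
  then show ?thesis by (simp add: Int_absorb2)
next
  case False
  define e0 where "e0 = Min (D - A)"
  have e0: "e0 \<in> D - A" using False assms(1) unfolding e0_def by (intro Min_in) auto
  have "D \<subseteq> insert e0 ((D \<inter> A) \<union> (D \<inter> B))"
  proof
    fix d assume d: "d \<in> D"
    have "e0 \<le> d" if "d \<notin> A" using d that assms(1) unfolding e0_def by (intro Min_le) auto
    then show "d \<in> insert e0 ((D \<inter> A) \<union> (D \<inter> B))"
      using assms(2)[of e0 d] e0 d by fastforce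
  qed
  then have "card D \<le> card (insert e0 ((D \<inter> A) \<union> (D \<inter> B)))"
    using assms(1) by (intro card_mono) auto
  also have "\<dots> \<le> card ((D \<inter> A) \<union> (D \<inter> B)) + 1" by (simp add: card_insert_le_m1 card_insert_if)
  also have "\<dots> \<le> card (D \<inter> A) + card (D \<inter> B) + 1" using card_Un_le by simp
  finally show ?thesis .
qed

lemma card_le_ordered_cover_split:
  fixes D :: "nat set"
  assumes "finite D"
    and "\<And>e f. e \<in> D \<Longrightarrow> f \<in> D \<Longrightarrow> e < f \<Longrightarrow> (f \<le> t \<or> t < e) \<Longrightarrow> e \<in> A \<or> f \<in> B"
  shows "card D \<le> card (D \<inter> A) + card (D \<inter> B) + 2"
proof -
  define D1 where "D1 = {e \<in> D. e \<le> t}"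
  define D2 where "D2 = {e \<in> D. t < e}"
  have fin: "finite D1" "finite D2" using assms(1) by (auto simp: D1_def D2_def)
  have card_split: "card (D \<inter> X) = card (D1 \<inter> X) + card (D2 \<inter> X)" for X
  proof -
    have "D \<inter> X = (D1 \<inter> X) \<union> (D2 \<inter> X)" "(D1 \<inter> X) \<inter> (D2 \<inter> X) = {}"
      by (auto simp: D1_def D2_def)
    then show ?thesis using fin by (simp add: card_Un_disjoint)
  qed
  from card_split[of UNIV] have "card D = card D1 + card D2" by simp
  moreover have "card D1 \<le> card (D1 \<inter> A) + card (D1 \<inter> B) + 1"
    by (rule card_le_ordered_cover[OF fin(1)]) (use assms(2) in \<open>auto simp: D1_def\<close>)
  moreover have "card D2 \<le> card (D2 \<inter> A) + card (D2 \<inter> B) + 1"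
    by (rule card_le_ordered_cover[OF fin(2)]) (use assms(2) in \<open>auto simp: D2_def\<close>)
  ultimately show ?thesis using card_split[of A] card_split[of B] by linarith
qed

lemma card_even_below: "card {i. Suc i < L \<and> i mod 2 \<noteq> (1::nat)} = L div 2"
proof -
  have "{i. Suc i < L \<and> i mod 2 \<noteq> (1::nat)} = (\<lambda>j. 2 * j) ` {..< L div 2}"
    by (auto simp: image_def)
  then show ?thesis by (simp add: card_image inj_on_def)
qed

lemma card_odd_below: "card {i. Suc i < L \<and> i mod 2 \<noteq> (0::nat)} = (L - 1) div 2"
proof -
  have "{i. Suc i < L \<and> i mod 2 \<noteq> (0::nat)} = (\<lambda>j. 2 * j + 1) ` {..< (L - 1) div 2}"
  proof (intro set_eqI iffI)
    fix x assume "x \<in> {i. Suc i < L \<and> i mod 2 \<noteq> 0}"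
    then have "x = 2 * (x div 2) + 1" "x div 2 < (L - 1) div 2" by auto presburger+
    then show "x \<in> (\<lambda>j. 2 * j + 1) ` {..< (L - 1) div 2}" by blast
  qed auto
  then show ?thesis by (simp add: card_image inj_on_def)
qed

lemma finite_components: "finite W \<Longrightarrow> finite (components W E)"
  by (rule finite_subset[of _ "Pow W"]) (auto simp: components_def)

lemma two_components_if_unreachable:
  assumes "finite W" "u \<in> W" "v \<in> W" "\<not> (restr E W)\<^sup>*\<^sup>* u v"
  shows "2 \<le> card (components W E)"
proof -
  let ?Cu = "{y \<in> W. (restr E W)\<^sup>*\<^sup>* u y}" and ?Cv = "{y \<in> W. (restr E W)\<^sup>*\<^sup>* v y}"
  have "?Cu \<noteq> ?Cv" using assms by auto
  moreover have "{?Cu, ?Cv} \<subseteq> components W E" using assms by (auto simp: components_def)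
  then have "card {?Cu, ?Cv} \<le> card (components W E)"
    by (intro card_mono finite_components[OF assms(1)])
  ultimately show ?thesis by simp
qed

lemma card_components_indep:
  assumes "indep E W" shows "card (components W E) = card W"
proof -
  have "(restr E W)\<^sup>*\<^sup>* x y \<Longrightarrow> x = y" for x y
    by (induction rule: rtranclp_induct) (use assms in \<open>auto simp: restr_def indep_def\<close>)
  then have "{y \<in> W. (restr E W)\<^sup>*\<^sup>* x y} = {x}" if "x \<in> W" for x
    using that by auto
  then have "components W E = (\<lambda>x. {x}) ` W"
    unfolding components_def by auto
  then show ?thesis by (simp add: card_image)
qed

lemma not_complete_if_two_components:
  assumes "2 \<le> num_components V E S" shows "\<not> complete_graph V E"
proof
  assume complete: "complete_graph V E"
  have "components (V - S) E \<subseteq> {V - S}"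
  proof
    fix C assume "C \<in> components (V - S) E"
    then obtain x where x: "x \<in> V - S" "C = {y \<in> V - S. (restr E (V - S))\<^sup>*\<^sup>* x y}"
      by (auto simp: components_def)
    have "(restr E (V - S))\<^sup>*\<^sup>* x y" if "y \<in> V - S" for y
      using complete x that by (cases "x = y") (auto simp: complete_graph_def restr_def)
    then show "C \<in> {V - S}" using x by auto
  qed
  then have "card (components (V - S) E) \<le> 1" using card_mono[of "{V - S}"] by fastforce
  then show False using assms by (simp add: num_components_def)
qed

lemma num_components_le_card_if_tough:
  assumes "ereal (real k) \<le> toughness V E" "S \<subseteq> V" "2 \<le> num_components V E S"
  shows "k * num_components V E S \<le> card S"
proof -
  let ?c = "num_components V E S"
  have "toughness V E \<le> ereal (real (card S) / real ?c)"
    using assms(2,3) not_complete_if_two_components[OF assms(3)]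
    unfolding toughness_def by (auto intro: Inf_lower)
  with assms(1) have "ereal (real k) \<le> ereal (real (card S) / real ?c)" by (rule order_trans)
  then have "real k \<le> real (card S) / real ?c" by simp
  moreover have "real ?c > 0" using assms(3) by auto
  ultimately have "real k * real ?c \<le> real (card S)" by (simp add: field_simps)
  then show ?thesis by (simp only: of_nat_mult[symmetric] of_nat_le_iff)
qed

section \<open>Tough (P2 \<union> kP1)-free graphs\<close>

definition nbhd :: "('a \<Rightarrow> 'a \<Rightarrow> bool) \<Rightarrow> 'a set \<Rightarrow> 'a set" where
  "nbhd E X = {v. \<exists>w\<in>X. E v w}"

locale tough_free_graph =
  fixes V :: "'a set" and E :: "'a \<Rightarrow> 'a \<Rightarrow> bool" and k :: nat
  assumes graph: "graph V E" and k_ge_2: "2 \<le> k"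
    and tough: "ereal (real k) \<le> toughness V E"
    and free: "H_free (P2_kP1_verts k) P2_kP1_edge V E"
begin

lemma finite_V: "finite V" using graph by (simp add: graph_def)
lemma edge_in_V: "E x y \<Longrightarrow> x \<in> V \<and> y \<in> V" using graph by (simp add: graph_def)
lemma edge_sym: "E x y \<Longrightarrow> E y x" using graph by (simp add: graph_def)
lemma edge_irrefl [simp]: "\<not> E x x" using graph by (simp add: graph_def)

lemma card_separator_ge:
  assumes "S \<subseteq> V" "x \<in> V - S" "y \<in> V - S" "\<not> (restr E (V - S))\<^sup>*\<^sup>* x y"
  shows "2 * k \<le> card S"
proof -
  have "2 \<le> num_components V E S"
    unfolding num_components_def using finite_V assms(2-4)
    by (intro two_components_if_unreachable) auto
  with num_components_le_card_if_tough[OF tough assms(1)] show ?thesis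
    by (metis le_trans mult.commute mult_le_mono2)
qed

lemma reachable: "a \<in> V \<Longrightarrow> b \<in> V \<Longrightarrow> (restr E V)\<^sup>*\<^sup>* a b"
  using card_separator_ge[of "{}" a b] k_ge_2 by auto

lemma card_indep_le:
  assumes "R \<subseteq> V" "indep E R" "2 \<le> card R"
  shows "(k + 1) * card R \<le> card V"
proof -
  have "num_components V E (V - R) = card R"
    using card_components_indep[OF assms(2)] assms(1)
    by (simp add: num_components_def double_diff)
  with num_components_le_card_if_tough[OF tough, of "V - R"] assms(3)
  have "k * card R \<le> card (V - R)" by simp
  also have "\<dots> = card V - card R" using assms(1) finite_V by (simp add: card_Diff_subset finite_subset)
  finally show ?thesis using card_mono[OF finite_V assms(1)] by simp
qed

lemma no_induced_P2_kP1:
  assumes "E u v" "K \<subseteq> V" "card K = k" "u \<notin> K" "v \<notin> K"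
    "\<forall>x\<in>K. \<not> E u x \<and> \<not> E v x" "indep E K"
  shows False
proof -
  obtain ks where ks: "distinct ks" "set ks = K"
    using finite_distinct_list[OF finite_subset[OF assms(2) finite_V]] by blast
  define xs where "xs = u # v # ks"
  have "u \<noteq> v" using assms(1) by auto
  then have dist: "distinct xs" using ks assms(4,5) by (simp add: xs_def)
  have len: "length xs = k + 2" using ks assms(3) distinct_card[of ks] by (simp add: xs_def)
  have cases: "i = 0 \<and> xs ! i = u \<or> i = 1 \<and> xs ! i = v \<or> 2 \<le> i \<and> xs ! i \<in> K"
    if "i < k + 2" for i
    using that len ks(2) by (cases i; cases "i - 1") (auto simp: xs_def)
  have "inj_on ((!) xs) (P2_kP1_verts k)"
    using dist len by (auto simp: inj_on_def nth_eq_iff_index_eq P2_kP1_verts_def)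
  moreover have "(!) xs ` P2_kP1_verts k \<subseteq> V"
    using cases assms(1,2) edge_in_V by (fastforce simp: P2_kP1_verts_def)
  moreover have "P2_kP1_edge i j \<longleftrightarrow> E (xs ! i) (xs ! j)"
    if "i \<in> P2_kP1_verts k" "j \<in> P2_kP1_verts k" for i j
    using cases[of i] cases[of j] that assms(1,6,7) edge_sym
    by (auto simp: P2_kP1_verts_def P2_kP1_edge_def indep_def)
  ultimately have "induced_subgraph_of (P2_kP1_verts k) P2_kP1_edge V E"
    unfolding induced_subgraph_of_def by blast
  then show False using free by (simp add: H_free_def)
qed

lemma card_nonnbrs_in_indep_less:
  assumes "X \<subseteq> V" "indep E X" "w \<in> X" "E p w"
  shows "card {x\<in>X. \<not> E p x} < k"
proof (rule ccontr)
  assume "\<not> ?thesis"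
  then obtain K where K: "K \<subseteq> {x\<in>X. \<not> E p x}" "card K = k"
    by (metis not_less obtain_subset_with_card_n)
  have "p \<notin> X" using assms(2-4) unfolding indep_def by blast
  show False
  proof (rule no_induced_P2_kP1[OF assms(4) _ K(2)])
    show "K \<subseteq> V" "p \<notin> K" "w \<notin> K" using K(1) assms(1,4) \<open>p \<notin> X\<close> by auto
    show "\<forall>x\<in>K. \<not> E p x \<and> \<not> E w x" using K(1) assms(2,3) unfolding indep_def by blast
    show "indep E K" using K(1) by (intro indep_subset[OF assms(2)]) auto
  qed
qed

lemma no_edge_outside_nbhd_of_indep:
  assumes "X \<subseteq> V" "indep E X" "k \<le> card X" "u \<notin> nbhd E X" "v \<notin> nbhd E X"
  shows "\<not> E u v"
proof
  assume uv: "E u v"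
  obtain K where K: "K \<subseteq> X" "card K = k" using obtain_subset_with_card_n[OF assms(3)] by metis
  have "u \<notin> X" "v \<notin> X" using assms(4,5) uv edge_sym unfolding nbhd_def by blast+
  show False
  proof (rule no_induced_P2_kP1[OF uv _ K(2)])
    show "K \<subseteq> V" "u \<notin> K" "v \<notin> K" using K(1) assms(1) \<open>u \<notin> X\<close> \<open>v \<notin> X\<close> by auto
    show "\<forall>x\<in>K. \<not> E u x \<and> \<not> E v x" using K(1) assms(4,5) unfolding nbhd_def by blast
    show "indep E K" using K(1) by (intro indep_subset[OF assms(2)]) auto
  qed
qed

lemma card_nonnbrs_image_less:
  assumes "X \<subseteq> V" "indep E X" "w \<in> X" "E p w" "h \<in> X"
    "finite M" "inj_on g M" "g ` M \<subseteq> X - {h}" "\<forall>i\<in>M. \<not> E p (g i)"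
  shows "card M + (if E p h then 0 else 1) < k"
proof -
  let ?N = "g ` M \<union> (if E p h then {} else {h})"
  have "?N \<subseteq> {x\<in>X. \<not> E p x}" using assms(5,8,9) by auto
  then have "card ?N \<le> card {x\<in>X. \<not> E p x}"
    using finite_subset[OF assms(1) finite_V] by (intro card_mono) auto
  then have "card ?N < k" using card_nonnbrs_in_indep_less[OF assms(1-4)] by linarith
  moreover have "card ?N = card M + (if E p h then 0 else 1)"
  proof -
    have "h \<notin> g ` M" using assms(8) by blast
    then show ?thesis using assms(6,7) by (simp add: card_image)
  qed
  ultimately show ?thesis by simp
qed

end

section \<open>Longest paths and detours\<close>

locale longest_path = tough_free_graph +
  fixes P :: "'a list"
  assumes distinct_P: "distinct P" and set_P: "set P \<subseteq> V" and walk_P: "walk E P"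
    and length_P: "2 \<le> length P"
    and longest: "\<And>Q. distinct Q \<Longrightarrow> set Q \<subseteq> V \<Longrightarrow> walk E Q \<Longrightarrow> Q \<noteq> [] \<Longrightarrow>
       hd Q = hd P \<Longrightarrow> last Q = last P \<Longrightarrow> length Q \<le> length P"
begin

lemma path_edge: "Suc t < length P \<Longrightarrow> E (P ! t) (P ! Suc t)"
  using walk_P by (simp add: walk_def)

lemma nth_P_in_V: "i < length P \<Longrightarrow> P ! i \<in> V"
  using set_P by auto

lemma nth_P_eq_iff [simp]: "i < length P \<Longrightarrow> j < length P \<Longrightarrow> P ! i = P ! j \<longleftrightarrow> i = j"
  using distinct_P by (simp add: nth_eq_iff_index_eq)

lemma nth_P_in_image_iff: "j < length P \<Longrightarrow> A \<subseteq> {..<length P} \<Longrightarrow> P ! j \<in> (!) P ` A \<longleftrightarrow> j \<in> A"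
  by auto

definition outside_path :: "'a list \<Rightarrow> bool" where
  "outside_path Q \<longleftrightarrow> distinct Q \<and> set Q \<subseteq> V \<and> set Q \<inter> set P = {} \<and> walk E Q \<and> Q \<noteq> []"

(* I lists, in order, the positions in P @ Q visited by a rerouted path from hd P to last P. *)
lemma length_reroute_le:
  assumes Q: "outside_path Q" and I: "distinct I" "set I \<subseteq> {..<length P + length Q}"
    "I \<noteq> []" "hd I = 0" "last I = length P - 1" "walk E (map ((!) (P @ Q)) I)"
  shows "length I \<le> length P"
proof -
  let ?R = "map ((!) (P @ Q)) I"
  have PQ: "distinct (P @ Q)" using Q distinct_P by (auto simp: outside_path_def)
  have I_lt: "\<forall>i\<in>set I. i < length (P @ Q)" using I(2) by auto
  have "distinct ?R" using I(1) inj_on_nth[OF PQ I_lt] by (simp add: distinct_map)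
  moreover have "set ?R \<subseteq> V"
  proof -
    have "set ?R \<subseteq> set (P @ Q)" using I_lt by (auto simp del: set_append intro!: nth_mem)
    then show ?thesis using set_P Q by (auto simp: outside_path_def)
  qed
  moreover have "hd ?R = hd P" "last ?R = last P" "?R \<noteq> []"
  proof -
    have "P \<noteq> []" "length P - 1 < length P" using length_P by auto
    then show "hd ?R = hd P" "last ?R = last P" "?R \<noteq> []"
      using I(3-5) by (simp_all add: hd_map last_map nth_append hd_conv_nth last_conv_nth)
  qed
  ultimately show ?thesis using longest[of ?R] I(6) by simp
qed

lemma map_nth_append_upt_length: "map ((!) (P @ Q)) [length P..<length P + length Q] = Q"
  by (rule nth_equalityI) (auto simp: nth_append)

lemma segment:
  assumes "i < j" "j \<le> length P"
  shows "map ((!) (P @ Q)) [i..<j] \<noteq> []" "hd (map ((!) (P @ Q)) [i..<j]) = P ! i"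
    "last (map ((!) (P @ Q)) [i..<j]) = P ! (j - 1)" "walk E (map ((!) (P @ Q)) [i..<j])"
proof -
  have "[i..<j] \<noteq> []" "hd [i..<j] = i" "last [i..<j] = j - 1" "j - 1 < length P"
    using assms by auto
  then show "map ((!) (P @ Q)) [i..<j] \<noteq> []" "hd (map ((!) (P @ Q)) [i..<j]) = P ! i"
    "last (map ((!) (P @ Q)) [i..<j]) = P ! (j - 1)"
    using assms by (simp_all add: hd_map last_map nth_append)
  show "walk E (map ((!) (P @ Q)) [i..<j])"
    by (rule walk_map_upt) (use assms in \<open>simp add: nth_append path_edge\<close>)
qed

lemma reversed_segment:
  assumes "i < j" "j \<le> length P"
  shows "map ((!) (P @ Q)) (rev [i..<j]) \<noteq> []" "hd (map ((!) (P @ Q)) (rev [i..<j])) = P ! (j - 1)"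
    "last (map ((!) (P @ Q)) (rev [i..<j])) = P ! i" "walk E (map ((!) (P @ Q)) (rev [i..<j]))"
  using segment[OF assms, of Q] by (simp_all add: rev_map[symmetric] hd_rev last_rev walk_rev edge_sym)

lemma no_detour_between_consecutive:
  assumes Q: "outside_path Q" and ij: "Suc i < length P"
    and e: "E (P ! i) (hd Q)" "E (last Q) (P ! Suc i)"
  shows False
proof -
  let ?L = "length P" and ?q = "length Q"
  let ?I = "[0..<Suc i] @ [?L..<?L + ?q] @ [Suc i..<?L]"
  have Qn: "Q \<noteq> []" "walk E Q" "0 < ?q" using Q by (auto simp: outside_path_def)
  have w: "walk E (map ((!) (P @ Q)) ?I)"
    unfolding map_append map_nth_append_upt_length
    using segment[of 0 "Suc i" Q] segment[of "Suc i" ?L Q] ij Qn e by (simp add: walk_append del: upt_Suc)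
  have "length ?I \<le> ?L"
    by (rule length_reroute_le[OF Q _ _ _ _ _ w]) (use ij Qn in \<open>auto simp: last_append simp del: upt_Suc\<close>)
  moreover have "length ?I = ?L + ?q" using ij by simp
  ultimately show False using Qn(3) by linarith
qed

lemma no_detour_with_crossing_succs:
  assumes Q: "outside_path Q" and ij: "i < j" "Suc j < length P"
    and e: "E (P ! i) (hd Q)" "E (last Q) (P ! j)" "E (P ! Suc i) (P ! Suc j)"
  shows False
proof -
  let ?L = "length P" and ?q = "length Q"
  let ?I = "[0..<Suc i] @ [?L..<?L + ?q] @ rev [Suc i..<Suc j] @ [Suc j..<?L]"
  have Qn: "Q \<noteq> []" "walk E Q" "0 < ?q" using Q by (auto simp: outside_path_def)
  have w: "walk E (map ((!) (P @ Q)) ?I)"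
    unfolding map_append map_nth_append_upt_length
    using segment[of 0 "Suc i" Q] reversed_segment[of "Suc i" "Suc j" Q] segment[of "Suc j" ?L Q] ij Qn e by (simp add: walk_append del: upt_Suc)
  have "length ?I \<le> ?L"
    by (rule length_reroute_le[OF Q _ _ _ _ _ w]) (use ij Qn in \<open>auto simp: last_append simp del: upt_Suc\<close>)
  moreover have "length ?I = ?L + ?q" using ij by simp
  ultimately show False using Qn(3) by linarith
qed

lemma no_detour_with_crossing_preds:
  assumes Q: "outside_path Q" and ij: "0 < i" "i < j" "j < length P"
    and e: "E (P ! (i - 1)) (P ! (j - 1))" "E (P ! i) (hd Q)" "E (last Q) (P ! j)"
  shows False
proof -
  let ?L = "length P" and ?q = "length Q"
  let ?I = "[0..<i] @ rev [i..<j] @ [?L..<?L + ?q] @ [j..<?L]"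
  have Qn: "Q \<noteq> []" "walk E Q" "0 < ?q" using Q by (auto simp: outside_path_def)
  have w: "walk E (map ((!) (P @ Q)) ?I)"
    unfolding map_append map_nth_append_upt_length
    using segment[of 0 i Q] reversed_segment[of i j Q] segment[of j ?L Q] ij Qn e by (simp add: walk_append del: upt_Suc)
  have "length ?I \<le> ?L"
    by (rule length_reroute_le[OF Q _ _ _ _ _ w]) (use ij Qn in \<open>auto simp: last_append simp del: upt_Suc\<close>)
  moreover have "length ?I = ?L + ?q" using ij by simp
  ultimately show False using Qn(3) by linarith
qed

lemma no_detour_with_chords_after:
  assumes Q: "outside_path Q" and ij: "Suc e < f" "f \<le> t" "Suc t < length P"
    and e: "E (P ! e) (hd Q)" "E (last Q) (P ! f)" "E (P ! t) (P ! Suc e)" "E (P ! (f - 1)) (P ! Suc t)"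
  shows False
proof -
  let ?L = "length P" and ?q = "length Q"
  let ?I = "[0..<Suc e] @ [?L..<?L + ?q] @ [f..<Suc t] @ [Suc e..<f] @ [Suc t..<?L]"
  have Qn: "Q \<noteq> []" "walk E Q" "0 < ?q" using Q by (auto simp: outside_path_def)
  have w: "walk E (map ((!) (P @ Q)) ?I)"
    unfolding map_append map_nth_append_upt_length
    using segment[of 0 "Suc e" Q] segment[of f "Suc t" Q] segment[of "Suc e" f Q] segment[of "Suc t" ?L Q] ij Qn e by (simp add: walk_append del: upt_Suc)
  have "length ?I \<le> ?L"
    by (rule length_reroute_le[OF Q _ _ _ _ _ w]) (use ij Qn in \<open>auto simp: last_append simp del: upt_Suc\<close>)
  moreover have "length ?I = ?L + ?q" using ij by simp
  ultimately show False using Qn(3) by linarith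
qed

lemma no_detour_with_chords_before:
  assumes Q: "outside_path Q" and ij: "t < e" "Suc e < f" "f < length P"
    and e: "E (P ! t) (P ! Suc e)" "E (P ! (f - 1)) (P ! Suc t)" "E (P ! e) (hd Q)" "E (last Q) (P ! f)"
  shows False
proof -
  let ?L = "length P" and ?q = "length Q"
  let ?I = "[0..<Suc t] @ [Suc e..<f] @ [Suc t..<Suc e] @ [?L..<?L + ?q] @ [f..<?L]"
  have Qn: "Q \<noteq> []" "walk E Q" "0 < ?q" using Q by (auto simp: outside_path_def)
  have w: "walk E (map ((!) (P @ Q)) ?I)"
    unfolding map_append map_nth_append_upt_length
    using segment[of 0 "Suc t" Q] segment[of "Suc e" f Q] segment[of "Suc t" "Suc e" Q] segment[of f ?L Q] ij Qn e by (simp add: walk_append del: upt_Suc)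
  have "length ?I \<le> ?L"
    by (rule length_reroute_le[OF Q _ _ _ _ _ w]) (use ij Qn in \<open>auto simp: last_append simp del: upt_Suc\<close>)
  moreover have "length ?I = ?L + ?q" using ij by simp
  ultimately show False using Qn(3) by linarith
qed

section \<open>Attachments of vertex sets off a longest path\<close>

definition attach :: "'a set \<Rightarrow> nat set" where
  "attach H = {i. i < length P \<and> (\<exists>w\<in>H. E (P ! i) w)}"

definition outside_connected :: "'a set \<Rightarrow> bool" where
  "outside_connected H \<longleftrightarrow> (\<forall>w\<in>H. \<forall>w'\<in>H. \<exists>Q. outside_path Q \<and> hd Q = w \<and> last Q = w')"

definition succs :: "'a set \<Rightarrow> 'a set" where
  "succs H = (\<lambda>i. P ! Suc i) ` {i \<in> attach H. Suc i < length P}"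

definition preds :: "'a set \<Rightarrow> 'a set" where
  "preds H = (\<lambda>i. P ! (i - 1)) ` {i \<in> attach H. 0 < i}"

lemma attach_lt: "i \<in> attach H \<Longrightarrow> i < length P"
  by (simp add: attach_def)

lemma attach_subset: "attach H \<subseteq> {..<length P}"
  by (auto simp: attach_def)

lemma finite_attach: "finite (attach H)"
  by (simp add: attach_def)

lemma outside_connected_singleton:
  "v \<in> V \<Longrightarrow> v \<notin> set P \<Longrightarrow> outside_connected {v}"
  by (auto simp: outside_connected_def outside_path_def intro!: exI[of _ "[v]"])

lemma attach_succ_not_adjacent:
  assumes H: "outside_connected H" and i: "i \<in> attach H" "Suc i < length P" and w: "w \<in> H"
  shows "\<not> E (P ! Suc i) w"
proof
  assume "E (P ! Suc i) w"
  obtain w' where w': "w' \<in> H" "E (P ! i) w'" using i(1) by (auto simp: attach_def)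
  obtain Q where "outside_path Q" "hd Q = w'" "last Q = w"
    using H w w'(1) by (auto simp: outside_connected_def)
  with w'(2) \<open>E (P ! Suc i) w\<close> show False
    using no_detour_between_consecutive[OF _ i(2)] edge_sym by blast
qed

lemma attach_not_consecutive:
  "outside_connected H \<Longrightarrow> i \<in> attach H \<Longrightarrow> Suc i \<notin> attach H"
  using attach_succ_not_adjacent by (auto simp: attach_def)

lemma attach_succs_not_adjacent:
  assumes H: "outside_connected H" and ij: "i \<in> attach H" "j \<in> attach H" "i < j" "Suc j < length P"
  shows "\<not> E (P ! Suc i) (P ! Suc j)"
proof
  assume "E (P ! Suc i) (P ! Suc j)"
  obtain w w' where w: "w \<in> H" "E (P ! i) w" and w': "w' \<in> H" "E (P ! j) w'"
    using ij(1,2) by (auto simp: attach_def)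
  obtain Q where "outside_path Q" "hd Q = w" "last Q = w'"
    using H w(1) w'(1) by (auto simp: outside_connected_def)
  with w(2) w'(2) \<open>E (P ! Suc i) (P ! Suc j)\<close> show False
    using no_detour_with_crossing_succs[OF _ ij(3,4)] edge_sym by blast
qed

lemma attach_preds_not_adjacent:
  assumes H: "outside_connected H" and ij: "i \<in> attach H" "j \<in> attach H" "0 < i" "i < j"
  shows "\<not> E (P ! (i - 1)) (P ! (j - 1))"
proof
  assume "E (P ! (i - 1)) (P ! (j - 1))"
  obtain w w' where w: "w \<in> H" "E (P ! i) w" and w': "w' \<in> H" "E (P ! j) w'"
    using ij(1,2) by (auto simp: attach_def)
  obtain Q where "outside_path Q" "hd Q = w" "last Q = w'"
    using H w(1) w'(1) by (auto simp: outside_connected_def)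
  with w(2) w'(2) \<open>E (P ! (i - 1)) (P ! (j - 1))\<close> show False
    using no_detour_with_crossing_preds[OF _ ij(3,4) attach_lt[OF ij(2)]] edge_sym by blast
qed

lemma card_attach_ge:
  assumes H: "outside_connected H" "H \<subseteq> V - set P" "y \<in> H"
    and closed: "\<And>w z. w \<in> H \<Longrightarrow> E w z \<Longrightarrow> z \<in> H \<or> z \<in> set P"
  shows "2 * k \<le> card (attach H)"
proof -
  define S where "S = (!) P ` attach H"
  have S_V: "S \<subseteq> V" using nth_P_in_V by (auto simp: S_def attach_def)
  have stays: "w \<in> H" if "(restr E (V - S))\<^sup>*\<^sup>* y w" for w
    using that
  proof induction
    case (step w w')
    then have "E w' w" "w' \<in> V - S" by (auto simp: restr_def edge_sym)
    with closed[of w w'] step.IH show ?case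
      by (auto simp: S_def attach_def in_set_conv_nth edge_sym)
  qed (rule H(3))
  have L: "0 < length P" "1 < length P" using length_P by auto
  obtain s where s: "s \<in> set P" "s \<notin> S"
  proof (cases "0 \<in> attach H")
    case False
    then have "P ! 0 \<notin> S" using nth_P_in_image_iff[OF L(1) attach_subset] by (simp add: S_def)
    with L that nth_mem show ?thesis by blast
  next
    case True
    then have "1 \<notin> attach H" using attach_not_consecutive[OF H(1)] by fastforce
    then have "P ! 1 \<notin> S" using nth_P_in_image_iff[OF L(2) attach_subset] by (simp add: S_def)
    with L that nth_mem show ?thesis by blast
  qed
  have "2 * k \<le> card S"
  proof (rule card_separator_ge[OF S_V])
    show "y \<in> V - S" "s \<in> V - S" using H(2,3) s set_P by (auto simp: S_def attach_def)
    show "\<not> (restr E (V - S))\<^sup>*\<^sup>* y s" using stays H(2) s(1) by blast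
  qed
  also have "card S = card (attach H)"
    unfolding S_def by (rule card_image) (auto simp: inj_on_def attach_def)
  finally show ?thesis .
qed

lemma succs_subset: "succs H \<subseteq> set P"
  by (auto simp: succs_def)

lemma preds_subset: "preds H \<subseteq> set P"
  by (auto simp: preds_def attach_def)

lemma card_succs: "card (attach H) \<le> card (succs H) + 1"
proof -
  have "card (attach H) \<le> card (insert (length P - 1) {i \<in> attach H. Suc i < length P})"
    using finite_attach by (intro card_mono) (auto simp: attach_def)
  also have "\<dots> \<le> card {i \<in> attach H. Suc i < length P} + 1"
    using finite_attach by (simp add: card_insert_if)
  also have "card {i \<in> attach H. Suc i < length P} = card (succs H)"
    unfolding succs_def by (rule card_image[symmetric]) (auto simp: inj_on_def)
  finally show ?thesis .
qed

lemma card_preds: "card (attach H) \<le> card (preds H) + 1"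
proof -
  have "card (attach H) \<le> card (insert 0 {i \<in> attach H. 0 < i})"
    using finite_attach by (intro card_mono) auto
  also have "\<dots> \<le> card {i \<in> attach H. 0 < i} + 1"
    using finite_attach by (simp add: card_insert_if)
  also have "card {i \<in> attach H. 0 < i} = card (preds H)"
    unfolding preds_def by (rule card_image[symmetric]) (auto simp: inj_on_def attach_def)
  finally show ?thesis .
qed

lemma succs_indep:
  assumes H: "outside_connected H" shows "indep E (succs H)"
proof -
  have "\<not> E (P ! Suc i) (P ! Suc j)"
    if "i \<in> attach H" "j \<in> attach H" "Suc i < length P" "Suc j < length P" for i j
    using attach_succs_not_adjacent[OF H that(1,2) _ that(4)]
      attach_succs_not_adjacent[OF H that(2,1) _ that(3)] edge_sym
    by (cases i j rule: linorder_cases) auto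
  then show ?thesis by (auto simp: indep_def succs_def)
qed

lemma preds_indep:
  assumes H: "outside_connected H" shows "indep E (preds H)"
proof -
  have "\<not> E (P ! (i - 1)) (P ! (j - 1))"
    if "i \<in> attach H" "j \<in> attach H" "0 < i" "0 < j" for i j
    using attach_preds_not_adjacent[OF H that(1,2,3)]
      attach_preds_not_adjacent[OF H that(2,1,4)] edge_sym
    by (cases i j rule: linorder_cases) auto
  then show ?thesis by (auto simp: indep_def preds_def)
qed

lemma succs_not_adjacent:
  "outside_connected H \<Longrightarrow> x \<in> succs H \<Longrightarrow> w \<in> H \<Longrightarrow> \<not> E w x"
  unfolding succs_def using attach_succ_not_adjacent edge_sym by blast

lemma preds_not_adjacent:
  assumes H: "outside_connected H" and x: "x \<in> preds H" and w: "w \<in> H"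
  shows "\<not> E w x"
proof
  assume "E w x"
  obtain i where i: "i \<in> attach H" "0 < i" "x = P ! (i - 1)" using x by (auto simp: preds_def)
  then have "i - 1 \<in> attach H" using \<open>E w x\<close> w edge_sym by (auto simp: attach_def)
  with attach_not_consecutive[OF H this] i show False by simp
qed

lemma outside_reach_connected:
  assumes y: "y \<in> V - set P"
  shows "outside_connected {w. (restr E (V - set P))\<^sup>*\<^sup>* y w}"
  unfolding outside_connected_def
proof (intro ballI)
  let ?R = "restr E (V - set P)"
  fix w w' assume "w \<in> {w. ?R\<^sup>*\<^sup>* y w}" "w' \<in> {w. ?R\<^sup>*\<^sup>* y w}"
  then have yw: "?R\<^sup>*\<^sup>* y w" and yw': "?R\<^sup>*\<^sup>* y w'" by auto
  have "?R\<^sup>*\<^sup>* w w'"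
    using rtranclp_restr_sym[of E, OF edge_sym yw] yw' by (rule rtranclp_trans)
  then obtain Q where "Q \<noteq> []" "hd Q = w" "last Q = w'" "distinct Q" "walk E Q" "set Q \<subseteq> V - set P"
    using rtranclp_restr_imp_path rtranclp_restr_in[OF yw y] by metis
  then show "\<exists>Q. outside_path Q \<and> hd Q = w \<and> last Q = w'"
    by (auto simp: outside_path_def)
qed

lemma outside_vertices_nonadjacent:
  assumes y: "y \<in> V - set P" and z: "z \<in> V - set P" shows "\<not> E y z"
proof
  assume yz: "E y z"
  define H where "H = {w. (restr E (V - set P))\<^sup>*\<^sup>* y w}"
  have "restr E (V - set P) y z" using y z yz by (simp add: restr_def)
  then have H: "outside_connected H" "H \<subseteq> V - set P" "y \<in> H" "z \<in> H"
    using outside_reach_connected[OF y] rtranclp_restr_in[OF _ y] by (auto simp: H_def)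
  have closed: "x \<in> H \<or> x \<in> set P" if "w \<in> H" "E w x" for w x
  proof -
    have "restr E (V - set P) w x" if "x \<notin> set P"
      using \<open>w \<in> H\<close> H(2) \<open>E w x\<close> edge_in_V that by (auto simp: restr_def)
    then show ?thesis using \<open>w \<in> H\<close> by (auto simp: H_def)
  qed
  have "2 * k \<le> card (attach H)" by (rule card_attach_ge[OF H(1-3) closed])
  then have "k \<le> card (succs H)" using card_succs[of H] k_ge_2 by linarith
  then obtain K where K: "K \<subseteq> succs H" "card K = k" by (meson obtain_subset_with_card_n)
  show False
  proof (rule no_induced_P2_kP1[OF yz _ K(2)])
    show "K \<subseteq> V" "y \<notin> K" "z \<notin> K" using K(1) succs_subset set_P y z by blast+
    show "\<forall>x\<in>K. \<not> E y x \<and> \<not> E z x" using K(1) succs_not_adjacent[OF H(1)] H(3,4) by blast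
    show "indep E K" using K(1) by (rule indep_subset[OF succs_indep[OF H(1)]])
  qed
qed

end

locale longest_path_outside = longest_path +
  fixes h assumes h_outside: "h \<in> V - set P"
begin

definition X :: "'a set" where "X = insert h (succs {h})"
definition Y :: "'a set" where "Y = insert h (preds {h})"

lemma nbr_h_on_path: "E w h \<Longrightarrow> w \<in> set P"
  using outside_vertices_nonadjacent[of w h] h_outside edge_in_V by blast

lemma h_connected: "outside_connected {h}"
  using h_outside by (simp add: outside_connected_singleton)

lemma card_attach_h: "2 * k \<le> card (attach {h})"
  by (rule card_attach_ge[OF h_connected]) (use h_outside in \<open>auto intro: nbr_h_on_path[OF edge_sym]\<close>)

lemma X_subset: "X \<subseteq> V" and Y_subset: "Y \<subseteq> V"
  using h_outside succs_subset[of "{h}"] preds_subset[of "{h}"] set_P unfolding X_def Y_def by blast+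

lemma X_indep: "indep E X"
proof -
  have "\<not> E h x \<and> \<not> E x h" if "x \<in> succs {h}" for x
    using succs_not_adjacent[OF h_connected that] edge_sym by blast
  then show ?thesis using succs_indep[OF h_connected] by (auto simp: X_def indep_def)
qed

lemma Y_indep: "indep E Y"
proof -
  have "\<not> E h x \<and> \<not> E x h" if "x \<in> preds {h}" for x
    using preds_not_adjacent[OF h_connected that] edge_sym by blast
  then show ?thesis using preds_indep[OF h_connected] by (auto simp: Y_def indep_def)
qed

lemma card_X: "2 * k \<le> card X"
proof -
  have "h \<notin> succs {h}" using h_outside succs_subset by blast
  then have "card X = card (succs {h}) + 1"
    using finite_subset[OF succs_subset] by (simp add: X_def)
  then show ?thesis using card_succs[of "{h}"] card_attach_h by linarith
qed

lemma card_Y: "2 * k \<le> card Y"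
proof -
  have "h \<notin> preds {h}" using h_outside preds_subset by blast
  then have "card Y = card (preds {h}) + 1"
    using finite_subset[OF preds_subset] by (simp add: Y_def)
  then show ?thesis using card_preds[of "{h}"] card_attach_h by linarith
qed

lemma outside_path_h: "outside_path [h]"
  using h_outside by (simp add: outside_path_def)

lemma no_crossing_chords:
  assumes ef: "e \<in> attach {h}" "f \<in> attach {h}" "e < f"
    and t: "f \<le> t \<or> t < e" "Suc t < length P"
    and chords: "E (P ! t) (P ! Suc e)" "E (P ! Suc t) (P ! (f - 1))"
  shows False
proof -
  have "Suc e \<noteq> f" using attach_not_consecutive[OF h_connected ef(1)] ef(2) by auto
  then have ef': "Suc e < f" using ef(3) by simp
  have h: "E (P ! e) (hd [h])" "E (last [h]) (P ! f)" "f < length P"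
    using ef(1,2) edge_sym by (auto simp: attach_def)
  from t(1) show False
  proof
    assume "f \<le> t"
    then show False
      using no_detour_with_chords_after[OF outside_path_h ef' _ t(2) h(1,2) chords(1)] chords(2) edge_sym
      by blast
  next
    assume "t < e"
    then show False
      using no_detour_with_chords_before[OF outside_path_h _ ef' h(3) chords(1) _ h(1,2)] chords(2) edge_sym
      by blast
  qed
qed

definition succ_misses :: "nat \<Rightarrow> nat set" where
  "succ_misses t = {e \<in> attach {h}. Suc e < length P \<and> \<not> E (P ! t) (P ! Suc e)}"

definition pred_misses :: "nat \<Rightarrow> nat set" where
  "pred_misses t = {f \<in> attach {h}. 0 < f \<and> \<not> E (P ! Suc t) (P ! (f - 1))}"

lemma card_attach_le_misses:
  assumes t: "Suc t < length P"
  shows "card (attach {h}) \<le> card (succ_misses t) + card (pred_misses t) + 2"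
proof -
  have "card (attach {h}) \<le>
      card (attach {h} \<inter> succ_misses t) + card (attach {h} \<inter> pred_misses t) + 2"
  proof (rule card_le_ordered_cover_split[OF finite_attach])
    fix e f assume ef: "e \<in> attach {h}" "f \<in> attach {h}" "e < f" "f \<le> t \<or> t < e"
    show "e \<in> succ_misses t \<or> f \<in> pred_misses t"
    proof (rule ccontr)
      assume "\<not> (e \<in> succ_misses t \<or> f \<in> pred_misses t)"
      moreover have "Suc e < length P" "0 < f" using ef(3) attach_lt[OF ef(2)] by auto
      ultimately have "E (P ! t) (P ! Suc e)" "E (P ! Suc t) (P ! (f - 1))"
        using ef(1,2) by (auto simp: succ_misses_def pred_misses_def)
      then show False by (rule no_crossing_chords[OF ef t])
    qed
  qed
  moreover have "attach {h} \<inter> succ_misses t = succ_misses t" "attach {h} \<inter> pred_misses t = pred_misses t"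
    by (auto simp: succ_misses_def pred_misses_def)
  ultimately show ?thesis by simp
qed

(* Each of P ! t and P ! Suc t misses fewer than k vertices of X resp. Y, and at least one of
   them misses h, since consecutive vertices of P are never both adjacent to h. *)
lemma card_misses_le:
  assumes t: "Suc t < length P" and nbhd: "P ! t \<in> nbhd E X" "P ! Suc t \<in> nbhd E Y"
  shows "card (succ_misses t) + card (pred_misses t) + 3 \<le> 2 * k"
proof -
  obtain w w' where w: "w \<in> X" "E (P ! t) w" and w': "w' \<in> Y" "E (P ! Suc t) w'"
    using nbhd by (auto simp: nbhd_def)
  have "card (succ_misses t) + (if E (P ! t) h then 0 else 1) < k"
  proof (rule card_nonnbrs_image_less[OF X_subset X_indep w])
    show "(\<lambda>i. P ! Suc i) ` succ_misses t \<subseteq> X - {h}"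
      using h_outside by (auto simp: succ_misses_def X_def succs_def)
  qed (auto simp: succ_misses_def X_def inj_on_def finite_attach)
  moreover have "card (pred_misses t) + (if E (P ! Suc t) h then 0 else 1) < k"
  proof (rule card_nonnbrs_image_less[OF Y_subset Y_indep w'])
    show "(\<lambda>i. P ! (i - 1)) ` pred_misses t \<subseteq> Y - {h}"
      using h_outside by (auto simp: pred_misses_def Y_def preds_def attach_def)
  qed (auto simp: pred_misses_def Y_def inj_on_def finite_attach attach_def)
  moreover have "\<not> (E (P ! t) h \<and> E (P ! Suc t) h)"
    using attach_not_consecutive[OF h_connected] t by (auto simp: attach_def)
  ultimately show ?thesis by (auto split: if_splits)
qed

lemma not_nbhd_X_and_next_nbhd_Y:
  assumes "Suc t < length P" shows "\<not> (P ! t \<in> nbhd E X \<and> P ! Suc t \<in> nbhd E Y)"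
  using card_misses_le[OF assms] card_attach_le_misses[OF assms] card_attach_h by fastforce

section \<open>Parity structure\<close>

definition in_both_nbhds :: "nat \<Rightarrow> bool" where
  "in_both_nbhds t \<longleftrightarrow> P ! t \<in> nbhd E X \<and> P ! t \<in> nbhd E Y"

lemma no_edge_outside_nbhd_X: "u \<notin> nbhd E X \<Longrightarrow> v \<notin> nbhd E X \<Longrightarrow> \<not> E u v"
  by (rule no_edge_outside_nbhd_of_indep[OF X_subset X_indep]) (use card_X in auto)

lemma no_edge_outside_nbhd_Y: "u \<notin> nbhd E Y \<Longrightarrow> v \<notin> nbhd E Y \<Longrightarrow> \<not> E u v"
  by (rule no_edge_outside_nbhd_of_indep[OF Y_subset Y_indep]) (use card_Y in auto)

lemma in_both_nbhds_Suc_Suc: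
  assumes "in_both_nbhds t" "Suc (Suc t) < length P" shows "in_both_nbhds (Suc (Suc t))"
proof -
  have "P ! Suc t \<notin> nbhd E Y"
    using not_nbhd_X_and_next_nbhd_Y[of t] assms by (auto simp: in_both_nbhds_def)
  then have Y: "P ! Suc (Suc t) \<in> nbhd E Y"
    using no_edge_outside_nbhd_Y[of "P ! Suc t"] path_edge[OF assms(2)] by blast
  then have "P ! Suc t \<notin> nbhd E X" using not_nbhd_X_and_next_nbhd_Y[OF assms(2)] by blast
  then have "P ! Suc (Suc t) \<in> nbhd E X"
    using no_edge_outside_nbhd_X[of "P ! Suc t"] path_edge[OF assms(2)] by blast
  with Y show ?thesis by (simp add: in_both_nbhds_def)
qed

lemma in_both_nbhds_minus_2:
  assumes "in_both_nbhds t" "2 \<le> t" "t < length P" shows "in_both_nbhds (t - 2)"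
proof -
  have t: "Suc (t - 1) = t" "Suc (t - 2) = t - 1" "Suc (t - 2) < length P" using assms(2,3) by auto
  have e: "E (P ! (t - 2)) (P ! (t - 1))" using path_edge[OF t(3)] t(2) by simp
  have "P ! (t - 1) \<notin> nbhd E X"
    using not_nbhd_X_and_next_nbhd_Y[of "t - 1"] assms t(1) by (auto simp: in_both_nbhds_def)
  then have X: "P ! (t - 2) \<in> nbhd E X" using no_edge_outside_nbhd_X[of "P ! (t - 2)"] e by blast
  then have "P ! (t - 1) \<notin> nbhd E Y" using not_nbhd_X_and_next_nbhd_Y[OF t(3)] t(2) by auto
  then have "P ! (t - 2) \<in> nbhd E Y" using no_edge_outside_nbhd_Y[of "P ! (t - 2)"] e by blast
  with X show ?thesis by (simp add: in_both_nbhds_def)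
qed

definition first_attach :: nat where "first_attach = Min (attach {h})"

lemma first_attach: "first_attach \<in> attach {h}"
  unfolding first_attach_def using card_attach_h k_ge_2 finite_attach
  by (intro Min_in) auto

lemma in_both_nbhds_same_parity:
  assumes "t < length P" "t mod 2 = first_attach mod 2" shows "in_both_nbhds t"
proof -
  let ?e = first_attach
  have base: "in_both_nbhds ?e"
    using first_attach by (auto simp: in_both_nbhds_def nbhd_def attach_def X_def Y_def)
  have up: "?e + 2 * d < length P \<Longrightarrow> in_both_nbhds (?e + 2 * d)" for d
    by (induction d) (auto simp: base dest: in_both_nbhds_Suc_Suc)
  have down: "2 * d \<le> ?e \<Longrightarrow> in_both_nbhds (?e - 2 * d)" for d
  proof (induction d)
    case (Suc d)
    then have "in_both_nbhds (?e - 2 * d - 2)"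
      using attach_lt[OF first_attach] by (intro in_both_nbhds_minus_2) auto
    then show ?case by (simp add: algebra_simps)
  qed (simp add: base)
  show ?thesis
  proof (cases "?e \<le> t")
    case True
    then obtain d where "t = ?e + 2 * d" using assms(2) by (metis le_add_diff_inverse mod_eq_dvd_iff_nat dvd_def)
    then show ?thesis using up[of d] assms(1) by simp
  next
    case False
    then obtain d where "?e = t + 2 * d" using assms(2)
      by (metis le_add_diff_inverse mod_eq_dvd_iff_nat dvd_def nat_le_linear)
    then show ?thesis using down[of d] by simp
  qed
qed

lemma not_nbhd_X_opposite_parity:
  assumes "Suc i < length P" "i mod 2 \<noteq> first_attach mod 2" shows "P ! i \<notin> nbhd E X"
proof -
  have "Suc i mod 2 = first_attach mod 2" using assms(2) by (simp add: mod2_eq_if split: if_splits)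
  then have "in_both_nbhds (Suc i)" using assms(1) by (rule in_both_nbhds_same_parity[rotated])
  then show ?thesis using not_nbhd_X_and_next_nbhd_Y[OF assms(1)] by (auto simp: in_both_nbhds_def)
qed

lemma not_nbhd_Y_opposite_parity:
  assumes "0 < i" "i < length P" "i mod 2 \<noteq> first_attach mod 2" shows "P ! i \<notin> nbhd E Y"
proof -
  have i: "Suc (i - 1) = i" using assms(1) by simp
  have "(i - 1) mod 2 = first_attach mod 2"
    using assms(1,3) by (cases i) (simp_all add: mod2_eq_if split: if_splits)
  then have "in_both_nbhds (i - 1)" using assms(2) by (intro in_both_nbhds_same_parity) auto
  then show ?thesis using not_nbhd_X_and_next_nbhd_Y[of "i - 1"] assms(2) i by (auto simp: in_both_nbhds_def)
qed

lemma attach_parity: "i \<in> attach {h} \<Longrightarrow> i mod 2 = first_attach mod 2"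
proof (rule ccontr)
  assume i: "i \<in> attach {h}" "i mod 2 \<noteq> first_attach mod 2"
  then have "P ! i \<in> nbhd E X" "P ! i \<in> nbhd E Y" "i < length P"
    by (auto simp: attach_def nbhd_def X_def Y_def)
  moreover have "Suc i < length P \<or> 0 < i" using length_P by linarith
  ultimately show False
    using not_nbhd_X_opposite_parity[of i] not_nbhd_Y_opposite_parity[of i] i(2) by blast
qed

lemma opposite_parity_nonadjacent:
  assumes "Suc i < length P" "Suc j < length P"
    "i mod 2 \<noteq> first_attach mod 2" "j mod 2 \<noteq> first_attach mod 2"
  shows "\<not> E (P ! i) (P ! j)"
  using no_edge_outside_nbhd_X[OF not_nbhd_X_opposite_parity[OF assms(1,3)]
      not_nbhd_X_opposite_parity[OF assms(2,4)]] .

end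

context longest_path
begin

section \<open>Every vertex lies on a longest path\<close>

lemma outside_vertex_parity:
  assumes "y \<in> V - set P"
  shows "\<exists>c. (\<forall>i \<in> attach {y}. i mod 2 = c) \<and>
    (\<forall>i j. Suc i < length P \<longrightarrow> Suc j < length P \<longrightarrow> i mod 2 \<noteq> c \<longrightarrow> j mod 2 \<noteq> c
      \<longrightarrow> \<not> E (P ! i) (P ! j))"
proof -
  interpret longest_path_outside V E k P y by unfold_locales (rule assms)
  show ?thesis using attach_parity opposite_parity_nonadjacent by blast
qed

lemma card_attach_outside: "y \<in> V - set P \<Longrightarrow> 2 * k \<le> card (attach {y})"
proof -
  assume "y \<in> V - set P"
  then interpret longest_path_outside V E k P y by unfold_locales
  show ?thesis by (rule card_attach_h)
qed

lemma attach_outside_nonempty: "y \<in> V - set P \<Longrightarrow> attach {y} \<noteq> {}"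
  using card_attach_outside[of y] k_ge_2 by auto

definition parity_class :: "nat \<Rightarrow> 'a set" where
  "parity_class c = {y \<in> V - set P. \<forall>i \<in> attach {y}. i mod 2 = c}"

definition off_parity :: "nat \<Rightarrow> nat set" where
  "off_parity c = {i. Suc i < length P \<and> i mod 2 \<noteq> c}"

lemma outside_eq_parity_classes: "V - set P = parity_class 0 \<union> parity_class 1"
proof
  show "V - set P \<subseteq> parity_class 0 \<union> parity_class 1"
  proof
    fix y assume y: "y \<in> V - set P"
    then obtain c where c: "\<And>i. i \<in> attach {y} \<Longrightarrow> i mod 2 = c"
      using outside_vertex_parity by blast
    obtain i where "i \<in> attach {y}" using attach_outside_nonempty[OF y] by blast
    then have "c = 0 \<or> c = 1" using c by fastforce
    with c y show "y \<in> parity_class 0 \<union> parity_class 1" by (auto simp: parity_class_def)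
  qed
qed (auto simp: parity_class_def)

lemma parity_classes_disjoint: "parity_class 0 \<inter> parity_class 1 = {}"
  using attach_outside_nonempty by (fastforce simp: parity_class_def)

lemma indep_parity_class:
  assumes y: "y \<in> parity_class c"
  shows "indep E ((!) P ` off_parity c \<union> parity_class c)"
proof -
  have y': "y \<in> V - set P" using y by (simp add: parity_class_def)
  obtain c' where c': "\<And>i. i \<in> attach {y} \<Longrightarrow> i mod 2 = c'"
    and nonadj: "\<And>i j. Suc i < length P \<Longrightarrow> Suc j < length P \<Longrightarrow> i mod 2 \<noteq> c' \<Longrightarrow> j mod 2 \<noteq> c'
      \<Longrightarrow> \<not> E (P ! i) (P ! j)"
    using outside_vertex_parity[OF y'] by blast
  obtain i where "i \<in> attach {y}" using attach_outside_nonempty[OF y'] by blast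
  then have "c' = c" using c' y by (auto simp: parity_class_def)
  have path_class: "\<not> E (P ! i) z \<and> \<not> E z (P ! i)" if "i \<in> off_parity c" "z \<in> parity_class c" for i z
    using that edge_sym by (auto simp: off_parity_def parity_class_def attach_def)
  have class_class: "\<not> E z z'" if "z \<in> parity_class c" "z' \<in> parity_class c" for z z'
    using that outside_vertices_nonadjacent by (auto simp: parity_class_def)
  show ?thesis
    unfolding indep_def
    using nonadj \<open>c' = c\<close> path_class class_class by (auto simp: off_parity_def)
qed

lemma length_P_ge_4: "y \<in> V - set P \<Longrightarrow> 4 \<le> length P"
  using card_attach_outside[of y] card_mono[OF _ attach_subset, of "{y}"] k_ge_2 by simp

lemma parity_class_bound:
  assumes y: "y \<in> parity_class c"
  shows "3 * (card (off_parity c) + card (parity_class c)) \<le> card V"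
proof -
  let ?R = "(!) P ` off_parity c \<union> parity_class c"
  have y': "y \<in> V - set P" using y by (simp add: parity_class_def)
  have "parity_class c \<subseteq> V" "off_parity c \<subseteq> {..<length P}"
    by (auto simp: parity_class_def off_parity_def)
  then have fin: "finite (parity_class c)" "finite (off_parity c)"
    using finite_V finite_subset by blast+
  have R_V: "?R \<subseteq> V" using nth_P_in_V by (auto simp: parity_class_def off_parity_def)
  have "card ((!) P ` off_parity c) = card (off_parity c)"
    by (rule card_image) (auto simp: inj_on_def off_parity_def)
  moreover have "(!) P ` off_parity c \<inter> parity_class c = {}"
    by (auto simp: off_parity_def parity_class_def)
  ultimately have card_R: "card ?R = card (off_parity c) + card (parity_class c)"
    using fin by (simp add: card_Un_disjoint)
  have "Suc 0 \<in> off_parity c \<or> 0 \<in> off_parity c"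
    using length_P_ge_4[OF y'] by (auto simp: off_parity_def)
  then have "0 < card (off_parity c)" using fin(2) card_gt_0_iff by blast
  moreover have "0 < card (parity_class c)" using fin(1) y card_gt_0_iff by blast
  ultimately have "2 \<le> card ?R" using card_R by linarith
  then have "(k + 1) * card ?R \<le> card V" by (rule card_indep_le[OF R_V indep_parity_class[OF y]])
  moreover have "3 * card ?R \<le> (k + 1) * card ?R" using k_ge_2 by (intro mult_le_mono1) simp
  ultimately show ?thesis unfolding card_R[symmetric] by linarith
qed

theorem vertices_on_path: "V \<subseteq> set P"
proof (rule ccontr)
  assume "\<not> V \<subseteq> set P"
  then obtain y where y: "y \<in> V - set P" by blast
  define L where "L = length P"
  define q0 where "q0 = card (parity_class 0)"
  define q1 where "q1 = card (parity_class 1)"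
  have fin: "finite (parity_class c)" for c
    using finite_subset[OF _ finite_V] by (auto simp: parity_class_def)
  have "V = set P \<union> (parity_class 0 \<union> parity_class 1)" "set P \<inter> (parity_class 0 \<union> parity_class 1) = {}"
    using outside_eq_parity_classes set_P by blast+
  then have "card V = card (set P) + card (parity_class 0 \<union> parity_class 1)"
    using fin card_Un_disjoint[of "set P" "parity_class 0 \<union> parity_class 1"] by simp
  then have card_V: "card V = L + q0 + q1"
    using fin parity_classes_disjoint distinct_card[OF distinct_P]
    by (simp add: L_def q0_def q1_def card_Un_disjoint)
  have off0: "card (off_parity 0) = (L - 1) div 2" and off1: "card (off_parity 1) = L div 2"
    unfolding off_parity_def L_def by (rule card_odd_below, rule card_even_below)
  have b0: "3 * ((L - 1) div 2 + q0) \<le> L + q0 + q1" if "0 < q0"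
    using parity_class_bound[of _ 0] that card_V off0 by (force simp: q0_def card_gt_0_iff)
  have b1: "3 * (L div 2 + q1) \<le> L + q0 + q1" if "0 < q1"
    using parity_class_bound[of _ 1] that card_V off1 by (force simp: q1_def card_gt_0_iff)
  have "0 < q0 \<or> 0 < q1"
    using y outside_eq_parity_classes fin by (auto simp: q0_def q1_def card_gt_0_iff)
  moreover have L: "4 \<le> L" using length_P_ge_4[OF y] by (simp add: L_def)
  moreover have "(L - 1) div 2 + L div 2 = L - 1" "L \<le> 2 * (L div 2) + 1" using L by linarith+
  ultimately show False using b0 b1 by (cases "q0 = 0"; cases "q1 = 0") auto
qed

end

context tough_free_graph
begin

lemma ham_path_exists:
  assumes ab: "a \<in> V" "b \<in> V" "a \<noteq> b"
  shows "\<exists>p. ham_path V E a b p"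
proof -
  define is_path where "is_path p \<longleftrightarrow>
    distinct p \<and> set p \<subseteq> V \<and> walk E p \<and> p \<noteq> [] \<and> hd p = a \<and> last p = b" for p
  obtain xs where "is_path xs"
    using rtranclp_restr_imp_path[OF reachable[OF ab(1,2)] ab(1)] by (auto simp: is_path_def)
  moreover have "length p < card V + 1" if "is_path p" for p
  proof -
    have "length p = card (set p)" using that distinct_card[of p] by (simp add: is_path_def)
    also have "\<dots> \<le> card V" using that finite_V by (intro card_mono) (auto simp: is_path_def)
    finally show ?thesis by simp
  qed
  ultimately obtain P where P: "is_path P" and longest: "\<And>p. is_path p \<Longrightarrow> length p \<le> length P"
    using ex_has_greatest_nat[of is_path xs length "card V + 1"] by blast
  have "2 \<le> length P"
  proof (rule ccontr)
    assume "\<not> 2 \<le> length P"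
    moreover have "0 < length P" using P by (simp add: is_path_def)
    ultimately have "length P = 1" by linarith
    then obtain x where "P = [x]" by (auto simp: length_Suc_conv)
    with P ab(3) show False by (auto simp: is_path_def)
  qed
  with P longest interpret longest_path V E k P
    by unfold_locales (simp_all add: is_path_def)
  have "set P = V" using vertices_on_path set_P by blast
  then show ?thesis using P unfolding ham_path_def is_path_def walk_def by blast
qed

end

theorem mainTheorem2:
  fixes V :: "'a set" and E :: "'a \<Rightarrow> 'a \<Rightarrow> bool" and k :: nat
  assumes "graph V E"
    and "k \<ge> 2"
    and "toughness V E \<ge> ereal (real k)"
    and "H_free (P2_kP1_verts k) P2_kP1_edge V E"
  shows "hamiltonian_connected V E"
proof -
  interpret tough_free_graph V E k using assms by unfold_locales auto
  show ?thesis unfolding hamiltonian_connected_def using ham_path_exists by blast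
qed

end
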